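(* Let $(X,D,K)$ be a complete $b$-metric-like space with constant $K\ge 1$. Assume that $S,T:X\to X$ are onto (surjective) mappings such that $$D(Tx,Sy)\geq \Big[R+L\min\{D^s(x,Tx),\,D^s(y,Sy),\,D^s(x,Sy),\,D^s(y,Tx)\}\Big]D(x,y)$$ for all $x,y\in X$, where $R>K$ and $L\geq 0$ are constants. Then $T$ and $S$ have a unique common fixed point, i.e. there is a unique $z\in X$ with $Tz=Sz=z$.
   Context: A $b$-metric-like space $(X,D,K)$ is a set $X$ with a function $D:X\times X\to[0,\infty)$ and a constant $K\ge 1$ such that for all $x,y,z\in X$: (i) $D(x,y)=0\Rightarrow x=y$; (ii) $D(x,y)=D(y,x)$; (iii) $D(x,y)\le K[D(x,z)+D(z,y)]$. (Note $D(x,x)$ need not be $0$.) A sequence $\{x_n\}$ converges to $x$ if $\lim_{n\to\infty}D(x_n,x)=D(x,x)$. A sequence $\{x_n\}$ is Cauchy if $\lim_{n,m\to\infty}D(x_n,x_m)$ exists and is finite. The space is complete if every Cauchy sequence $\{x_n\}$ converges to some $x\in X$ with $\lim_{n,m\to\infty}D(x_n,x_m)=D(x,x)=\lim_{n\to\infty}D(x_n,x)$. Notation: $D^s(x,y)=|2D(x,y)-D(x,x)-D(y,y)|$ for $x,y\in X$. *)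

theory Defs
  imports "HOL-Analysis.Analysis"
begin

definition b_metric_like :: "('a \<Rightarrow> 'a \<Rightarrow> real) \<Rightarrow> real \<Rightarrow> bool" where
  "b_metric_like D K \<longleftrightarrow> K \<ge> 1 \<and>
     (\<forall>x y. D x y \<ge> 0) \<and>
     (\<forall>x y. D x y = 0 \<longrightarrow> x = y) \<and>
     (\<forall>x y. D x y = D y x) \<and>
     (\<forall>x y z. D x y \<le> K * (D x z + D z y))"

definition bml_converges :: "('a \<Rightarrow> 'a \<Rightarrow> real) \<Rightarrow> (nat \<Rightarrow> 'a) \<Rightarrow> 'a \<Rightarrow> bool" where
  "bml_converges D s x \<longleftrightarrow> ((\<lambda>n. D (s n) x) \<longlonglongrightarrow> D x x)"

definition bml_cauchy :: "('a \<Rightarrow> 'a \<Rightarrow> real) \<Rightarrow> (nat \<Rightarrow> 'a) \<Rightarrow> bool" where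
  "bml_cauchy D s \<longleftrightarrow> (\<exists>l::real. ((\<lambda>(n,m). D (s n) (s m)) \<longlongrightarrow> l) (sequentially \<times>\<^sub>F sequentially))"

definition bml_complete :: "('a \<Rightarrow> 'a \<Rightarrow> real) \<Rightarrow> bool" where
  "bml_complete D \<longleftrightarrow> (\<forall>s. bml_cauchy D s \<longrightarrow>
     (\<exists>x. ((\<lambda>(n,m). D (s n) (s m)) \<longlongrightarrow> D x x) (sequentially \<times>\<^sub>F sequentially)
          \<and> ((\<lambda>n. D (s n) x) \<longlonglongrightarrow> D x x)))"

definition Ds :: "('a \<Rightarrow> 'a \<Rightarrow> real) \<Rightarrow> 'a \<Rightarrow> 'a \<Rightarrow> real" where
  "Ds D x y = \<bar>2 * D x y - D x x - D y y\<bar>"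

end

theory Submission
  imports Defs
begin

text \<open>Dropping the nonnegative term with coefficient L, the hypothesis says that the pair
  (T, S) is expansive: R D(x,y) \<le> D(Tx,Sy). Since both maps are onto, one can walk backwards,
  choosing x_{2n+1} with T x_{2n+1} = x_{2n} and x_{2n+2} with S x_{2n+2} = x_{2n+1}; then
  consecutive distances shrink by the factor 1/R. As K/R < 1, the weak triangle inequality still
  turns this geometric decay into D(x_n,x_m) \<rightarrow> 0, so by completeness x_n \<rightarrow> z with D(z,z) = 0.
  Expansiveness again forces the preimages of z under S and T to coincide with z, and it
  leaves no room for two distinct common fixed points.\<close>

lemma backward_orbit:
  assumes "surj T" and "surj S"
  obtains x where "\<And>n. even n \<Longrightarrow> T (x (Suc n)) = x n"
    and "\<And>n. odd n \<Longrightarrow> S (x (Suc n)) = x n"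
proof
  define x :: "nat \<Rightarrow> 'a" where
    "x = rec_nat undefined (\<lambda>n a. if even n then inv T a else inv S a)"
  show "T (x (Suc n)) = x n" if "even n" for n
    using that assms(1) by (simp add: x_def surj_f_inv_f)
  show "S (x (Suc n)) = x n" if "odd n" for n
    using that assms(2) by (simp add: x_def surj_f_inv_f)
qed

lemma geometric_decay:
  fixes a :: "nat \<Rightarrow> real"
  assumes "q \<ge> 0" and "\<And>n. a (Suc n) \<le> q * a n"
  shows "a n \<le> a 0 * q ^ n"
proof (induction n)
  case (Suc n)
  have "a (Suc n) \<le> q * a n"
    by (rule assms(2))
  also have "\<dots> \<le> q * (a 0 * q ^ n)"
    using Suc \<open>q \<ge> 0\<close> by (rule mult_left_mono)
  finally show ?case
    by (simp add: algebra_simps)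
qed simp

locale b_metric_like_space =
  fixes D :: "'a \<Rightarrow> 'a \<Rightarrow> real" and K :: real
  assumes b_metric_like: "b_metric_like D K"
begin

lemma K_ge_1: "K \<ge> 1"
  and D_nonneg: "D x y \<ge> 0"
  and D_eq_0: "D x y = 0 \<Longrightarrow> x = y"
  and D_sym: "D x y = D y x"
  and D_triangle: "D x y \<le> K * (D x z + D z y)"
  using b_metric_like unfolding b_metric_like_def by auto

lemma limit_unique:
  assumes "(\<lambda>n. D (u n) z) \<longlonglongrightarrow> 0" and "(\<lambda>n. D (u n) w) \<longlonglongrightarrow> 0"
  shows "z = w"
proof -
  have "(\<lambda>n. K * (D (u n) z + D (u n) w)) \<longlonglongrightarrow> K * (0 + 0)"
    by (intro tendsto_intros assms)
  moreover have "D z w \<le> K * (D (u n) z + D (u n) w)" for n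
    using D_triangle[of z w "u n"] D_sym[of z "u n"] by simp
  ultimately have "D z w \<le> 0"
    by (intro LIMSEQ_le_const) auto
  then show ?thesis
    using D_nonneg[of z w] D_eq_0 by simp
qed

context
  fixes s :: "nat \<Rightarrow> 'a" and c q :: real
  assumes q_nonneg: "q \<ge> 0" and Kq_less_1: "K * q < 1"
    and step_bound: "\<And>n. D (s n) (s (Suc n)) \<le> c * q ^ n"
begin

lemma c_nonneg: "c \<ge> 0"
  using step_bound[of 0] D_nonneg[of "s 0" "s 1"] by simp

lemma geometric_tail_bound:
  "D (s n) (s (n + Suc p)) \<le> K * c / (1 - K * q) * q ^ n"
proof (induction p arbitrary: n)
  case 0
  have "c * (1 - K * q) \<le> K * c"
    using mult_right_mono[OF K_ge_1 c_nonneg] c_nonneg K_ge_1 q_nonneg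
    by (simp add: algebra_simps add_increasing2)
  then have "c \<le> K * c / (1 - K * q)"
    using Kq_less_1 by (simp add: pos_le_divide_eq)
  have "D (s n) (s (n + Suc 0)) \<le> c * q ^ n"
    using step_bound by simp
  also have "\<dots> \<le> K * c / (1 - K * q) * q ^ n"
    using \<open>c \<le> _\<close> q_nonneg by (intro mult_right_mono) auto
  finally show ?case .
next
  case (Suc p)
  define C where "C = K * c / (1 - K * q)"
  have "D (s n) (s (n + Suc (Suc p))) \<le> K * (D (s n) (s (Suc n)) + D (s (Suc n)) (s (Suc n + Suc p)))"
    using D_triangle by simp
  also have "\<dots> \<le> K * (c * q ^ n + C * q ^ Suc n)"
    using step_bound[of n] Suc.IH[of "Suc n"] K_ge_1
    by (intro mult_left_mono add_mono) (auto simp: C_def)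
  also have "\<dots> = (K * c + K * C * q) * q ^ n"
    by (simp add: algebra_simps)
  also have "K * c + K * C * q = C"
    using Kq_less_1 by (simp add: C_def field_simps)
  finally show ?case
    by (simp add: C_def)
qed

lemma geometric_bound:
  "D (s n) (s m) \<le> (K * c / (1 - K * q) + 2 * K * c) * q ^ min n m"
proof -
  define C where "C = K * c / (1 - K * q)"
  have C_nonneg: "C \<ge> 0" and extra_nonneg: "2 * K * c * q ^ k \<ge> 0" for k
    using K_ge_1 c_nonneg q_nonneg Kq_less_1 by (auto simp: C_def)
  have "D (s n) (s m) \<le> C * q ^ min n m + 2 * K * c * q ^ min n m"
  proof (cases n m rule: linorder_cases)
    case less
    then obtain p where "m = n + Suc p"
      using less_imp_Suc_add by fastforce
    then show ?thesis
      using geometric_tail_bound[of n p] extra_nonneg[of n] less by (simp add: C_def)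
  next
    case equal
    \<comment> \<open>self-distances need not vanish, so the diagonal is bounded through s (Suc n)\<close>
    have "D (s n) (s n) \<le> K * (c * q ^ n + c * q ^ n)"
      using D_triangle[of "s n" "s n" "s (Suc n)"] D_sym[of "s n"] step_bound[of n] K_ge_1
      by (smt (verit) mult_left_mono)
    moreover have "C * q ^ n \<ge> 0"
      using C_nonneg q_nonneg by simp
    ultimately show ?thesis
      using equal by simp
  next
    case greater
    then obtain p where "n = m + Suc p"
      using less_imp_Suc_add by fastforce
    then show ?thesis
      using geometric_tail_bound[of m p] extra_nonneg[of m] greater D_sym[of "s n"]
      by (simp add: C_def)
  qed
  then show ?thesis
    by (simp add: C_def algebra_simps)
qed

lemma pairwise_distance_tendsto_0:
  "((\<lambda>(n, m). D (s n) (s m)) \<longlongrightarrow> 0) (sequentially \<times>\<^sub>F sequentially)"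
proof -
  define B where "B = K * c / (1 - K * q) + 2 * K * c"
  have "q < 1"
    using mult_right_mono[OF K_ge_1 q_nonneg] Kq_less_1 by simp
  then have "(\<lambda>k. B * q ^ k) \<longlonglongrightarrow> B * 0"
    using q_nonneg by (intro tendsto_intros LIMSEQ_power_zero) auto
  moreover have "filterlim (\<lambda>(n, m). min n m) sequentially (sequentially \<times>\<^sub>F sequentially)"
    unfolding filterlim_at_top eventually_prod_sequentially by auto
  ultimately have "((\<lambda>(n, m). B * q ^ min n m) \<longlongrightarrow> 0) (sequentially \<times>\<^sub>F sequentially)"
    using filterlim_compose[of "\<lambda>k. B * q ^ k"] by (simp add: case_prod_beta')
  then show ?thesis
    by (rule Lim_null_comparison[rotated], intro always_eventually)
      (auto simp: B_def geometric_bound D_nonneg)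
qed

lemma complete_geometric_limit:
  assumes "bml_complete D"
  obtains z where "(\<lambda>n. D (s n) z) \<longlonglongrightarrow> 0"
proof -
  obtain z where z_diag: "((\<lambda>(n, m). D (s n) (s m)) \<longlongrightarrow> D z z) (sequentially \<times>\<^sub>F sequentially)"
    and z_lim: "(\<lambda>n. D (s n) z) \<longlonglongrightarrow> D z z"
    using assms pairwise_distance_tendsto_0 unfolding bml_complete_def bml_cauchy_def by blast
  have "D z z = 0"
    using tendsto_unique[OF _ z_diag pairwise_distance_tendsto_0] by (simp add: prod_filter_eq_bot)
  with z_lim that show ?thesis
    by simp
qed

end

lemma limit_unique_shifted_subseq:
  fixes r :: "nat \<Rightarrow> nat"
  assumes "R > 0" and x_lim: "(\<lambda>n. D (x n) z) \<longlonglongrightarrow> 0" and "strict_mono r"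
    and preimage_bound: "\<And>n. D (x (Suc (r n))) w \<le> D (x (r n)) z / R"
  shows "w = z"
proof -
  have "(\<lambda>n. D (x (r n)) z / R) \<longlonglongrightarrow> 0"
    using LIMSEQ_subseq_LIMSEQ[OF x_lim \<open>strict_mono r\<close>] by (intro tendsto_divide_zero) (simp add: o_def)
  then have "(\<lambda>n. D (x (Suc (r n))) w) \<longlonglongrightarrow> 0"
    by (rule Lim_null_comparison[rotated]) (simp add: preimage_bound D_nonneg)
  moreover have "(\<lambda>n. D (x (Suc (r n))) z) \<longlonglongrightarrow> 0"
    using LIMSEQ_subseq_LIMSEQ[OF x_lim, of "Suc \<circ> r"] \<open>strict_mono r\<close>
    by (simp add: o_def strict_mono_def)
  ultimately show ?thesis
    by (rule limit_unique)
qed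

context
  fixes S T :: "'a \<Rightarrow> 'a" and R :: real
  assumes expansive: "\<And>x y. R * D x y \<le> D (T x) (S y)"
    and R_gt_K: "R > K"
begin

lemma R_pos: "R > 0"
  using K_ge_1 R_gt_K by simp

lemma common_fixed_point_unique:
  assumes "T z = z" "S z = z" "T z' = z'" "S z' = z'"
  shows "z = z'"
proof -
  have "(R - 1) * D z z' \<le> 0"
    using expansive[of z z'] assms by (simp add: algebra_simps)
  then have "D z z' \<le> 0"
    using K_ge_1 R_gt_K by (simp add: mult_le_0_iff)
  then show ?thesis
    using D_nonneg[of z z'] D_eq_0 by simp
qed

lemma backward_orbit_step:
  assumes T_step: "\<And>n. even n \<Longrightarrow> T (x (Suc n)) = x n"
    and S_step: "\<And>n. odd n \<Longrightarrow> S (x (Suc n)) = x n"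
  shows "D (x (Suc n)) (x (Suc (Suc n))) \<le> D (x n) (x (Suc n)) / R"
proof (cases "even n")
  case True
  then show ?thesis
    using expansive[of "x (Suc n)" "x (Suc (Suc n))"] R_pos T_step S_step[of "Suc n"]
    by (simp add: field_simps)
next
  case False
  then show ?thesis
    using expansive[of "x (Suc (Suc n))" "x (Suc n)"] R_pos T_step[of "Suc n"] S_step
    by (simp add: field_simps D_sym)
qed

theorem expansive_common_fixed_point:
  assumes "bml_complete D" and "surj S" and "surj T"
  shows "\<exists>!z. T z = z \<and> S z = z"
proof -
  obtain x where T_step: "\<And>n. even n \<Longrightarrow> T (x (Suc n)) = x n"
    and S_step: "\<And>n. odd n \<Longrightarrow> S (x (Suc n)) = x n"
    using backward_orbit[OF \<open>surj T\<close> \<open>surj S\<close>] by blast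
  have "D (x (Suc n)) (x (Suc (Suc n))) \<le> D (x n) (x (Suc n)) / R" for n
    by (rule backward_orbit_step) (use T_step S_step in auto)
  then have decay: "D (x n) (x (Suc n)) \<le> D (x 0) (x 1) * (1 / R) ^ n" for n
    using geometric_decay[of "1 / R" "\<lambda>n. D (x n) (x (Suc n))"] R_pos by simp
  have "K * (1 / R) < 1"
    using R_gt_K R_pos by simp
  then obtain z where x_lim: "(\<lambda>n. D (x n) z) \<longlonglongrightarrow> 0"
    using complete_geometric_limit[OF _ _ decay \<open>bml_complete D\<close>] R_pos by auto
  obtain w u where "S w = z" and "T u = z"
    using \<open>surj S\<close> \<open>surj T\<close> by (metis surjD)
  have "w = z"
  proof (rule limit_unique_shifted_subseq[OF R_pos x_lim, of "\<lambda>n. 2 * n"])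
    show "D (x (Suc (2 * n))) w \<le> D (x (2 * n)) z / R" for n
      using expansive[of "x (Suc (2 * n))" w] T_step[of "2 * n"] \<open>S w = z\<close> R_pos
      by (simp add: field_simps)
  qed (simp add: strict_mono_def)
  moreover have "u = z"
  proof (rule limit_unique_shifted_subseq[OF R_pos x_lim, of "\<lambda>n. 2 * n + 1"])
    show "D (x (Suc (2 * n + 1))) u \<le> D (x (2 * n + 1)) z / R" for n
      using expansive[of u "x (Suc (2 * n + 1))"] S_step[of "2 * n + 1"] \<open>T u = z\<close> R_pos
      by (simp add: field_simps D_sym)
  qed (simp add: strict_mono_def)
  ultimately show ?thesis
    using \<open>S w = z\<close> \<open>T u = z\<close> common_fixed_point_unique by blast
qed

end

end

theorem theorem2p1:
  fixes D :: "'a \<Rightarrow> 'a \<Rightarrow> real" and K R L :: real and S T :: "'a \<Rightarrow> 'a"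
  assumes "b_metric_like D K"
    and "bml_complete D"
    and "surj S" and "surj T"
    and "R > K" and "L \<ge> 0"
    and "\<forall>x y. D (T x) (S y) \<ge>
          (R + L * Min {Ds D x (T x), Ds D y (S y), Ds D x (S y), Ds D y (T x)}) * D x y"
  shows "\<exists>!z. T z = z \<and> S z = z"
proof -
  interpret b_metric_like_space D K
    by unfold_locales (rule assms(1))
  have "R * D x y \<le> D (T x) (S y)" for x y
  proof -
    have "Min {Ds D x (T x), Ds D y (S y), Ds D x (S y), Ds D y (T x)} \<ge> 0"
      by (simp add: Ds_def)
    then have "R * D x y \<le> (R + L * Min {Ds D x (T x), Ds D y (S y), Ds D x (S y), Ds D y (T x)}) * D x y"
      using \<open>L \<ge> 0\<close> D_nonneg[of x y] by (simp add: distrib_right)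
    also have "\<dots> \<le> D (T x) (S y)"
      using assms(7) by blast
    finally show ?thesis .
  qed
  then show ?thesis
    using expansive_common_fixed_point assms(2-5) by blast
qed

end
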